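(* Let $d\ge 3$, let $\Delta$ be a shellable simplicial $(d-1)$-sphere with facet-ridge graph $G$, and let $f(\Delta)$ be the total number of faces of $\Delta$ (including the empty face). For an acyclic orientation $\mathcal{O}$ of $G$, let $h_k^{\mathcal{O}}$ be the number of vertices of $G$ of indegree $k$ and set $f^{\mathcal{O}}=\sum_{k=0}^{d}2^k h_k^{\mathcal{O}}$. Let $M=\min\{f^{\mathcal{O}}:\mathcal{O}\text{ an acyclic orientation of }G\}$. Then $M=f(\Delta)$, and an acyclic orientation $\mathcal{O}$ of $G$ is good if and only if $f^{\mathcal{O}}=M$.
   Context: $\Delta$ is a simplicial complex homeomorphic to the $(d-1)$-sphere; facets have $d$ elements, ridges $d-1$. Shellable: there is an ordering $T_1,\dots,T_n$ of the facets with $\overline{T}_i\cap(\overline{T}_1\cup\cdots\cup\overline{T}_{i-1})$ pure $(d-2)$-dimensional for $i\ge2$ ($\overline{T}$ = all subsets of $T$). The facet-ridge graph $G$ has facets as vertices, adjacent iff they share a ridge. For $0\le k\le d$ and a face $\sigma$ with $|\sigma|=d-k$, $\mathcal{V}^\Delta_k(\sigma)$ is the set of vertices of $G$ corresponding to facets containing $\sigma$. An orientation of $G$ is good if for every such $k$ and $\sigma$ the induced orientation on $G[\mathcal{V}^\Delta_k(\sigma)]$ has exactly one sink. *)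

theory Defs
  imports "HOL-Analysis.Analysis"
begin

text \<open>Abstract simplicial complexes: a finite family of finite vertex sets, closed under
  taking subsets (so the empty face belongs to every nonempty complex).\<close>

definition simplicial_complex :: "'a set set \<Rightarrow> bool" where
  "simplicial_complex \<Delta> \<longleftrightarrow> finite \<Delta> \<and> \<Delta> \<noteq> {} \<and> (\<forall>\<sigma>\<in>\<Delta>. finite \<sigma>) \<and>
     (\<forall>\<sigma>\<in>\<Delta>. \<forall>\<tau>. \<tau> \<subseteq> \<sigma> \<longrightarrow> \<tau> \<in> \<Delta>)"

text \<open>Standard geometric realization, as a subset of the functions 'a => real:
  barycentric coordinates, with support a face.\<close>

definition geom_realization :: "'a set set \<Rightarrow> ('a \<Rightarrow> real) set" where
  "geom_realization \<Delta> = {x. (\<forall>v. 0 \<le> x v) \<and> {v. x v \<noteq> 0} \<in> \<Delta> \<and>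
                              (\<Sum>v\<in>{v. x v \<noteq> 0}. x v) = 1}"

definition is_sphere :: "'a set set \<Rightarrow> nat \<Rightarrow> bool" where
  "is_sphere \<Delta> n \<longleftrightarrow> simplicial_complex \<Delta> \<and>
     subtopology (powertop_real UNIV) (geom_realization \<Delta>) homeomorphic_space nsphere n"

definition facets :: "'a set set \<Rightarrow> 'a set set" where
  "facets \<Delta> = {F\<in>\<Delta>. \<forall>G\<in>\<Delta>. F \<subseteq> G \<longrightarrow> G = F}"

definition closure_of_faces :: "'a set set \<Rightarrow> 'a set set" where
  "closure_of_faces S = (\<Union>T\<in>S. Pow T)"

text \<open>A complex is pure of dimension m (faces with m+1 elements): all its maximal faces
  have exactly m+1 elements. Here we pass the number of elements k = m+1.\<close>

definition pure_card :: "'a set set \<Rightarrow> nat \<Rightarrow> bool" where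
  "pure_card \<Delta> k \<longleftrightarrow> (\<forall>F\<in>facets \<Delta>. card F = k)"

definition shellable :: "'a set set \<Rightarrow> nat \<Rightarrow> bool" where
  "shellable \<Delta> d \<longleftrightarrow> (\<exists>T. distinct T \<and> set T = facets \<Delta> \<and>
     (\<forall>i. 0 < i \<and> i < length T \<longrightarrow>
        pure_card (Pow (T ! i) \<inter> closure_of_faces {T ! j | j. j < i}) (d - 1)))"

definition fr_adj :: "'a set set \<Rightarrow> nat \<Rightarrow> 'a set \<Rightarrow> 'a set \<Rightarrow> bool" where
  "fr_adj \<Delta> d F G \<longleftrightarrow> F \<in> facets \<Delta> \<and> G \<in> facets \<Delta> \<and> F \<noteq> G \<and>
     (\<exists>R\<in>\<Delta>. card R = d - 1 \<and> R \<subseteq> F \<and> R \<subseteq> G)"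

text \<open>An orientation: a set of directed edges (a,b) meaning a -> b, containing exactly one
  direction of each edge of the facet-ridge graph and nothing else.\<close>

definition orientation :: "'a set set \<Rightarrow> nat \<Rightarrow> ('a set \<times> 'a set) set \<Rightarrow> bool" where
  "orientation \<Delta> d Or \<longleftrightarrow> (\<forall>(a, b)\<in>Or. fr_adj \<Delta> d a b) \<and>
     (\<forall>a b. fr_adj \<Delta> d a b \<longrightarrow> ((a, b) \<in> Or \<longleftrightarrow> (b, a) \<notin> Or))"

definition acyclic_orientation :: "'a set set \<Rightarrow> nat \<Rightarrow> ('a set \<times> 'a set) set \<Rightarrow> bool" where
  "acyclic_orientation \<Delta> d Or \<longleftrightarrow> orientation \<Delta> d Or \<and> acyclic Or"

definition indegree :: "('a set \<times> 'a set) set \<Rightarrow> 'a set \<Rightarrow> nat" where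
  "indegree Or F = card {G. (G, F) \<in> Or}"

definition h_vec :: "'a set set \<Rightarrow> ('a set \<times> 'a set) set \<Rightarrow> nat \<Rightarrow> nat" where
  "h_vec \<Delta> Or k = card {F\<in>facets \<Delta>. indegree Or F = k}"

definition f_orient :: "'a set set \<Rightarrow> nat \<Rightarrow> ('a set \<times> 'a set) set \<Rightarrow> nat" where
  "f_orient \<Delta> d Or = (\<Sum>k=0..d. 2 ^ k * h_vec \<Delta> Or k)"

definition V_sets :: "'a set set \<Rightarrow> 'a set \<Rightarrow> 'a set set" where
  "V_sets \<Delta> \<sigma> = {F\<in>facets \<Delta>. \<sigma> \<subseteq> F}"

definition good_orientation :: "'a set set \<Rightarrow> nat \<Rightarrow> ('a set \<times> 'a set) set \<Rightarrow> bool" where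
  "good_orientation \<Delta> d Or \<longleftrightarrow>
     (\<forall>k\<le>d. \<forall>\<sigma>\<in>\<Delta>. card \<sigma> = d - k \<longrightarrow>
        (\<exists>!F. F \<in> V_sets \<Delta> \<sigma> \<and> (\<forall>G\<in>V_sets \<Delta> \<sigma>. (F, G) \<notin> Or)))"

end

theory Submission
  imports Defs "HOL-Homology.Invariance_of_Domain"
begin

section \<open>Locally Euclidean spaces\<close>

definition Euclidean_neighbourhood :: "'b topology \<Rightarrow> nat \<Rightarrow> 'b \<Rightarrow> bool" where
  "Euclidean_neighbourhood T n p \<longleftrightarrow>
     (\<exists>W U f g. openin T W \<and> p \<in> W \<and> openin (Euclidean_space n) U \<and>
        homeomorphic_maps (subtopology T W) (subtopology (Euclidean_space n) U) f g)"

definition locally_Euclidean :: "'b topology \<Rightarrow> nat \<Rightarrow> bool" where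
  "locally_Euclidean T n \<longleftrightarrow> (\<forall>p\<in>topspace T. Euclidean_neighbourhood T n p)"

lemma Euclidean_neighbourhoodI:
  assumes "openin T W" "p \<in> W" "openin (Euclidean_space n) U"
    "homeomorphic_maps (subtopology T W) (subtopology (Euclidean_space n) U) f g"
  shows "Euclidean_neighbourhood T n p"
  unfolding Euclidean_neighbourhood_def using assms by (intro exI conjI)

lemma Euclidean_neighbourhoodE:
  assumes "Euclidean_neighbourhood T n p"
  obtains W U f g where "openin T W" "p \<in> W" "openin (Euclidean_space n) U"
    "homeomorphic_maps (subtopology T W) (subtopology (Euclidean_space n) U) f g"
  using assms unfolding Euclidean_neighbourhood_def by (elim exE conjE) (rule that)

lemma locally_EuclideanE:
  assumes "locally_Euclidean T n" and "p \<in> topspace T"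
  obtains W U f g where "openin T W" "p \<in> W" "openin (Euclidean_space n) U"
    "homeomorphic_maps (subtopology T W) (subtopology (Euclidean_space n) U) f g"
proof -
  have "Euclidean_neighbourhood T n p" using assms unfolding locally_Euclidean_def by blast
  then show thesis by (rule Euclidean_neighbourhoodE) (rule that)
qed

lemma homeomorphic_maps_preimage_subtopology:
  assumes gg: "homeomorphic_maps S T g g'"
  shows "homeomorphic_maps (subtopology S {x \<in> topspace S. g x \<in> W}) (subtopology T W) g g'"
proof (rule homeomorphic_maps_subtopologies[OF gg])
  have g: "continuous_map S T g" and g': "continuous_map T S g'"
    and g'g: "\<And>y. y \<in> topspace T \<Longrightarrow> g (g' y) = y"
    using gg by (simp_all add: homeomorphic_maps_def)
  show "g ` (topspace S \<inter> {x \<in> topspace S. g x \<in> W}) = topspace T \<inter> W"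
  proof
    show "g ` (topspace S \<inter> {x \<in> topspace S. g x \<in> W}) \<subseteq> topspace T \<inter> W"
      using continuous_map_image_subset_topspace[OF g] by auto
    show "topspace T \<inter> W \<subseteq> g ` (topspace S \<inter> {x \<in> topspace S. g x \<in> W})"
    proof
      fix y assume y: "y \<in> topspace T \<inter> W"
      then have "g' y \<in> topspace S \<inter> {x \<in> topspace S. g x \<in> W}"
        using continuous_map_image_subset_topspace[OF g'] g'g by auto
      then show "y \<in> g ` (topspace S \<inter> {x \<in> topspace S. g x \<in> W})" using g'g y by (metis IntD1 image_eqI)
    qed
  qed
qed

lemma Euclidean_neighbourhood_homeomorphic_maps:
  assumes gg: "homeomorphic_maps S T g g'" and p: "p \<in> topspace S"
    and "Euclidean_neighbourhood T n (g p)"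
  shows "Euclidean_neighbourhood S n p"
proof -
  obtain W U f f' where W: "openin T W" "g p \<in> W" and U: "openin (Euclidean_space n) U"
    and ff: "homeomorphic_maps (subtopology T W) (subtopology (Euclidean_space n) U) f f'"
    using assms(3) by (rule Euclidean_neighbourhoodE)
  have g: "continuous_map S T g" using gg by (simp add: homeomorphic_maps_def)
  have "homeomorphic_maps (subtopology S {x \<in> topspace S. g x \<in> W}) (subtopology (Euclidean_space n) U)
      (f \<circ> g) (g' \<circ> f')"
    using homeomorphic_maps_preimage_subtopology[OF gg] ff homeomorphic_maps_compose by blast
  moreover have "openin S {x \<in> topspace S. g x \<in> W}" using g W(1) by (rule openin_continuous_map_preimage)
  moreover have "p \<in> {x \<in> topspace S. g x \<in> W}" using p W(2) by simp
  ultimately show ?thesis using U by (intro Euclidean_neighbourhoodI)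
qed

lemma locally_Euclidean_homeomorphic_space:
  assumes "S homeomorphic_space T" and "locally_Euclidean T n"
  shows "locally_Euclidean S n"
proof -
  obtain g g' where gg: "homeomorphic_maps S T g g'"
    using assms(1) homeomorphic_space_def by blast
  have "g p \<in> topspace T" if "p \<in> topspace S" for p
    using gg that unfolding homeomorphic_maps_def continuous_map_def by blast
  then show ?thesis
    using assms(2) Euclidean_neighbourhood_homeomorphic_maps[OF gg] unfolding locally_Euclidean_def by blast
qed

lemma continuous_map_powertop_subtopology_projection:
  "continuous_map (subtopology (powertop_real UNIV) S) euclideanreal (\<lambda>x. x k)"
  by (metis UNIV_I continuous_map_from_subtopology continuous_map_product_projection)

lemma continuous_map_Euclidean_space_projection:
  "continuous_map (Euclidean_space n) euclideanreal (\<lambda>x. x k)"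
  unfolding Euclidean_space_def by (rule continuous_map_powertop_subtopology_projection)

lemma sum_atMost_split_last: "(\<Sum>i\<le>n. f i) = (\<Sum>i<n. f i) + (f (n::nat) :: 'b :: comm_monoid_add)"
  using sum.lessThan_Suc[of f n] by (simp add: lessThan_Suc_atMost)

lemma homeomorphic_maps_nsphere_hemisphere_ball:
  "homeomorphic_maps
     (subtopology (nsphere n) {z \<in> topspace (nsphere n). 0 < z n})
     (subtopology (Euclidean_space n) {y \<in> topspace (Euclidean_space n). (\<Sum>j<n. y j ^ 2) < 1})
     (\<lambda>z i. if i < n then z i else 0)
     (\<lambda>y i. if i < n then y i else if i = n then sqrt (1 - (\<Sum>j<n. y j ^ 2)) else 0)"
  (is "homeomorphic_maps ?H ?B ?\<pi> ?lift")
proof -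
  have sphere_eq: "(\<Sum>j<n. z j ^ 2) = 1 - z n ^ 2" if "z \<in> topspace (nsphere n)" for z
    using that by (simp add: nsphere sum_atMost_split_last)
  have "continuous_map ?H (Euclidean_space n) ?\<pi>"
    by (simp add: continuous_map_componentwise_Euclidean_space continuous_map_from_subtopology
        continuous_map_nsphere_projection)
  moreover have "?\<pi> z \<in> topspace ?B" if "z \<in> topspace ?H" for z
    using that sphere_eq[of z] by (auto simp: topspace_Euclidean_space)
  ultimately have \<pi>: "continuous_map ?H ?B ?\<pi>"
    by (auto simp: continuous_map_in_subtopology)
  have "continuous_map ?B euclideanreal (\<lambda>y. ?lift y i)" for i
    by (cases "i < n"; cases "i = n")
       (simp_all add: continuous_map_from_subtopology continuous_map_Euclidean_space_projection continuous_intros)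
  then have "continuous_map ?B (powertop_real UNIV) ?lift"
    by (simp add: continuous_map_componentwise_UNIV)
  moreover have "?lift y \<in> topspace ?H" if "y \<in> topspace ?B" for y
    using that by (simp add: nsphere sum_atMost_split_last)
  ultimately have lift: "continuous_map ?B ?H ?lift"
    by (auto simp: continuous_map_in_subtopology nsphere subtopology_subtopology)
  have "?lift (?\<pi> z) = z" if "z \<in> topspace ?H" for z
  proof -
    have "sqrt (1 - (\<Sum>j<n. z j ^ 2)) = z n"
      using that sphere_eq[of z] by (simp add: real_sqrt_unique)
    then show ?thesis using that by (auto simp: fun_eq_iff nsphere)
  qed
  moreover have "?\<pi> (?lift y) = y" if "y \<in> topspace ?B" for y
    using that by (auto simp: fun_eq_iff topspace_Euclidean_space)
  ultimately show ?thesis using \<pi> lift by (simp add: homeomorphic_maps_def)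
qed

lemma Euclidean_neighbourhood_nsphere_upper_hemisphere:
  assumes "z \<in> topspace (nsphere n)" and "0 < z n"
  shows "Euclidean_neighbourhood (nsphere n) n z"
proof (rule Euclidean_neighbourhoodI[OF _ _ _ homeomorphic_maps_nsphere_hemisphere_ball])
  show "openin (nsphere n) {z \<in> topspace (nsphere n). 0 < z n}"
    using openin_continuous_map_preimage[OF continuous_map_nsphere_projection[of n n], of "{0<..}"]
    by simp
  have "continuous_map (Euclidean_space n) euclideanreal (\<lambda>y. \<Sum>j<n. y j ^ 2)"
    by (intro continuous_intros continuous_map_Euclidean_space_projection) simp
  from openin_continuous_map_preimage[OF this, of "{..<1}"]
  show "openin (Euclidean_space n) {y \<in> topspace (Euclidean_space n). (\<Sum>j<n. y j ^ 2) < 1}"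
    by simp
  show "z \<in> {z \<in> topspace (nsphere n). 0 < z n}" using assms by simp
qed

lemma homeomorphic_maps_nsphere_signed_swap:
  fixes s :: real
  assumes "k \<le> n" and "s * s = 1"
  defines "\<rho> \<equiv> \<lambda>z i. if i = n then s * z k else if i = k then s * z n else z i"
  shows "homeomorphic_maps (nsphere n) (nsphere n) \<rho> \<rho>"
proof (rule homeomorphic_maps_involution)
  have "continuous_map (nsphere n) euclideanreal (\<lambda>z. \<rho> z i)" for i
    unfolding \<rho>_def
    by (simp add: continuous_map_nsphere_projection continuous_map_real_mult_left)
  then have "continuous_map (nsphere n) (powertop_real UNIV) \<rho>"
    by (simp add: continuous_map_componentwise_UNIV)
  moreover have "(\<Sum>i\<le>n. (\<rho> z i)\<^sup>2) = 1 \<and> (\<forall>i>n. \<rho> z i = 0)" if z: "z \<in> topspace (nsphere n)" for z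
  proof -
    define \<tau> where "\<tau> i = (if i = k then n else if i = n then k else i)" for i
    have "(\<rho> z i)\<^sup>2 = (z (\<tau> i))\<^sup>2" for i
      using assms(2) by (auto simp: \<rho>_def \<tau>_def power_mult_distrib power2_eq_square)
    then have "(\<Sum>i\<le>n. (\<rho> z i)\<^sup>2) = (\<Sum>i\<le>n. (z (\<tau> i))\<^sup>2)" by simp
    also have "\<dots> = (\<Sum>i\<le>n. (z i)\<^sup>2)"
      by (rule sum.reindex_bij_witness[of _ \<tau> \<tau>]) (use assms(1) in \<open>auto simp: \<tau>_def\<close>)
    finally show ?thesis using z assms(1) by (auto simp: nsphere \<rho>_def)
  qed
  ultimately show "continuous_map (nsphere n) (nsphere n) \<rho>"
    by (subst (2) nsphere) (auto simp: continuous_map_in_subtopology)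
  show "\<rho> (\<rho> z) = z" for z
    using assms(2) by (auto simp: \<rho>_def fun_eq_iff mult.assoc[symmetric])
qed

lemma locally_Euclidean_nsphere: "locally_Euclidean (nsphere n) n"
  unfolding locally_Euclidean_def
proof
  fix z assume z: "z \<in> topspace (nsphere n)"
  have "\<exists>k\<le>n. z k \<noteq> 0"
  proof (rule ccontr)
    assume "\<not> ?thesis"
    then have "(\<Sum>i\<le>n. (z i)\<^sup>2) = 0" by simp
    with z show False by (simp add: nsphere)
  qed
  then obtain k where k: "k \<le> n" "z k \<noteq> 0" by blast
  define s where "s = sgn (z k)"
  define \<rho> where "\<rho> = (\<lambda>x i. if i = n then s * x k else if i = k then s * x n else x i)"
  have \<rho>: "homeomorphic_maps (nsphere n) (nsphere n) \<rho> \<rho>"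
    unfolding \<rho>_def using k by (intro homeomorphic_maps_nsphere_signed_swap) (auto simp: s_def sgn_if)
  then have "\<rho> z \<in> topspace (nsphere n)"
    using z unfolding homeomorphic_maps_def continuous_map_def by blast
  moreover have "0 < \<rho> z n" using k by (simp add: \<rho>_def s_def sgn_if)
  ultimately show "Euclidean_neighbourhood (nsphere n) n z"
    using Euclidean_neighbourhood_homeomorphic_maps[OF \<rho> z]
      Euclidean_neighbourhood_nsphere_upper_hemisphere by blast
qed

section \<open>Invariance of domain and simplicial manifolds\<close>

lemma invariance_of_domain_into_locally_Euclidean:
  assumes T: "locally_Euclidean T n" and U: "openin (Euclidean_space n) U"
    and h: "continuous_map (subtopology (Euclidean_space n) U) T h" and inj: "inj_on h U"
  shows "openin T (h ` U)"
  unfolding openin_subopen[of T "h ` U"]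
proof
  fix q assume "q \<in> h ` U"
  then obtain y where y: "y \<in> U" and q: "q = h y" by blast
  have U_sub: "U \<subseteq> topspace (Euclidean_space n)" using U by (rule openin_subset)
  have "h y \<in> topspace T" using continuous_map_image_subset_topspace[OF h] y U_sub by auto
  with T obtain W V f g where W: "openin T W" "h y \<in> W" and V: "openin (Euclidean_space n) V"
    and fg: "homeomorphic_maps (subtopology T W) (subtopology (Euclidean_space n) V) f g"
    by (rule locally_EuclideanE)
  have f: "continuous_map (subtopology T W) (Euclidean_space n) f"
    using fg continuous_map_into_fulltopology unfolding homeomorphic_maps_def by blast
  have gf: "g (f x) = x" if "x \<in> W" for x
    using fg that openin_subset[OF W(1)] unfolding homeomorphic_maps_def by auto
  define Q where "Q = {z \<in> U. h z \<in> W}"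
  have "openin (subtopology (Euclidean_space n) U) Q"
    using openin_continuous_map_preimage[OF h W(1)] U_sub by (simp add: Q_def Int_absorb1)
  then have Q: "openin (Euclidean_space n) Q" using U openin_trans_full by blast
  have "continuous_map (subtopology (Euclidean_space n) Q) (subtopology T W) h"
    using continuous_map_from_subtopology_mono[OF h, of Q]
    by (auto simp: Q_def continuous_map_in_subtopology)
  then have "continuous_map (subtopology (Euclidean_space n) Q) (Euclidean_space n) (f \<circ> h)"
    using f by (rule continuous_map_compose)
  moreover have "inj_on (f \<circ> h) Q"
    using inj gf by (auto simp: Q_def inj_on_def) (metis)
  ultimately have fhO: "openin (Euclidean_space n) ((f \<circ> h) ` Q)"
    by (rule invariance_of_domain_Euclidean_space[OF Q])
  define N where "N = {x \<in> topspace (subtopology T W). f x \<in> (f \<circ> h) ` Q}"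
  have "openin (subtopology T W) N" unfolding N_def using f fhO by (rule openin_continuous_map_preimage)
  then have "openin T N" using W(1) openin_trans_full by blast
  moreover have "h y \<in> N"
    using W y \<open>h y \<in> topspace T\<close> by (auto simp: N_def Q_def)
  moreover have "N \<subseteq> h ` U"
  proof
    fix x assume "x \<in> N"
    then obtain z where "x \<in> W" "z \<in> U" "h z \<in> W" "f x = f (h z)" by (auto simp: N_def Q_def)
    then have "x = h z" using gf by metis
    then show "x \<in> h ` U" using \<open>z \<in> U\<close> by blast
  qed
  ultimately show "\<exists>N. openin T N \<and> q \<in> N \<and> N \<subseteq> h ` U" using q by blast
qed

lemma invariance_of_domain_from_locally_Euclidean:
  assumes T: "locally_Euclidean T n" and V: "openin T V"
    and \<theta>: "continuous_map (subtopology T V) (Euclidean_space n) \<theta>" and inj: "inj_on \<theta> V"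
  shows "openin (Euclidean_space n) (\<theta> ` V)"
  unfolding openin_subopen[of _ "\<theta> ` V"]
proof
  fix q assume "q \<in> \<theta> ` V"
  then obtain p where p: "p \<in> V" and q: "q = \<theta> p" by blast
  have "p \<in> topspace T" using openin_subset[OF V] p by blast
  with T obtain W U f g where W: "openin T W" "p \<in> W" and U: "openin (Euclidean_space n) U"
    and fg: "homeomorphic_maps (subtopology T W) (subtopology (Euclidean_space n) U) f g"
    by (rule locally_EuclideanE)
  have U_sub: "U \<subseteq> topspace (Euclidean_space n)" using U by (rule openin_subset)
  have g: "continuous_map (subtopology (Euclidean_space n) U) T g"
    using fg continuous_map_into_fulltopology unfolding homeomorphic_maps_def by blast
  have fg_inv: "f (g y) = y" if "y \<in> U" for y
    using fg that U_sub unfolding homeomorphic_maps_def by auto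
  have fp: "f p \<in> U" "g (f p) = p"
    using fg W \<open>p \<in> topspace T\<close> unfolding homeomorphic_maps_def continuous_map_def by auto
  define Q where "Q = {y \<in> U. g y \<in> V}"
  have "openin (subtopology (Euclidean_space n) U) Q"
    using openin_continuous_map_preimage[OF g V] U_sub by (simp add: Q_def Int_absorb1)
  then have Q: "openin (Euclidean_space n) Q" using U openin_trans_full by blast
  have "continuous_map (subtopology (Euclidean_space n) Q) (subtopology T V) g"
    using continuous_map_from_subtopology_mono[OF g, of Q]
    by (auto simp: Q_def continuous_map_in_subtopology)
  then have "continuous_map (subtopology (Euclidean_space n) Q) (Euclidean_space n) (\<theta> \<circ> g)"
    using \<theta> by (rule continuous_map_compose)
  moreover have "inj_on (\<theta> \<circ> g) Q"
    using inj fg_inv by (auto simp: Q_def inj_on_def) (metis)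
  ultimately have "openin (Euclidean_space n) ((\<theta> \<circ> g) ` Q)"
    by (rule invariance_of_domain_Euclidean_space[OF Q])
  moreover have "q \<in> (\<theta> \<circ> g) ` Q"
    using fp p q by (metis (mono_tags, lifting) Q_def comp_apply image_eqI mem_Collect_eq)
  moreover have "(\<theta> \<circ> g) ` Q \<subseteq> \<theta> ` V" by (auto simp: Q_def)
  ultimately show "\<exists>N. openin (Euclidean_space n) N \<and> q \<in> N \<and> N \<subseteq> \<theta> ` V" by blast
qed

lemma simplicial_complex_finite_face: "simplicial_complex \<Delta> \<Longrightarrow> \<sigma> \<in> \<Delta> \<Longrightarrow> finite \<sigma>"
  by (simp add: simplicial_complex_def)

lemma simplicial_complex_subface: "simplicial_complex \<Delta> \<Longrightarrow> \<sigma> \<in> \<Delta> \<Longrightarrow> \<tau> \<subseteq> \<sigma> \<Longrightarrow> \<tau> \<in> \<Delta>"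
  by (auto simp: simplicial_complex_def)

lemma simplicial_complex_face_subset_facet:
  assumes "simplicial_complex \<Delta>" and "\<sigma> \<in> \<Delta>"
  obtains F where "F \<in> facets \<Delta>" "\<sigma> \<subseteq> F"
proof -
  have "finite {\<tau>\<in>\<Delta>. \<sigma> \<subseteq> \<tau>}" using assms(1) by (simp add: simplicial_complex_def)
  then obtain F where F: "F \<in> {\<tau>\<in>\<Delta>. \<sigma> \<subseteq> \<tau>}" "\<forall>G\<in>{\<tau>\<in>\<Delta>. \<sigma> \<subseteq> \<tau>}. F \<le> G \<longrightarrow> F = G"
    using finite_has_maximal assms(2) by blast
  then have "F \<in> facets \<Delta>" by (auto simp: facets_def)
  then show thesis using that F(1) by blast
qed

abbreviation realization_space :: "'a set set \<Rightarrow> ('a \<Rightarrow> real) topology" where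
  "realization_space \<Delta> \<equiv> subtopology (powertop_real UNIV) (geom_realization \<Delta>)"

lemma geom_realization_nonneg: "x \<in> geom_realization \<Delta> \<Longrightarrow> 0 \<le> x v"
  by (simp add: geom_realization_def)

lemma geom_realization_support: "x \<in> geom_realization \<Delta> \<Longrightarrow> {v. x v \<noteq> 0} \<in> \<Delta>"
  by (simp add: geom_realization_def)

lemma geom_realization_sum:
  assumes "x \<in> geom_realization \<Delta>" "finite \<sigma>" "{v. x v \<noteq> 0} \<subseteq> \<sigma>"
  shows "(\<Sum>v\<in>\<sigma>. x v) = 1"
proof -
  have "(\<Sum>v\<in>{v. x v \<noteq> 0}. x v) = (\<Sum>v\<in>\<sigma>. x v)"
    by (rule sum.mono_neutral_left) (use assms in auto)
  then show ?thesis using assms(1) by (simp add: geom_realization_def)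
qed

lemma geom_realization_memI:
  assumes "simplicial_complex \<Delta>" "\<sigma> \<in> \<Delta>" "\<And>v. 0 \<le> x v" "\<And>v. x v \<noteq> 0 \<Longrightarrow> v \<in> \<sigma>"
    and "(\<Sum>v\<in>\<sigma>. x v) = 1"
  shows "x \<in> geom_realization \<Delta>"
proof -
  have supp: "{v. x v \<noteq> 0} \<subseteq> \<sigma>" using assms(4) by blast
  have "(\<Sum>v\<in>{v. x v \<noteq> 0}. x v) = (\<Sum>v\<in>\<sigma>. x v)"
    by (rule sum.mono_neutral_left) (use supp simplicial_complex_finite_face[OF assms(1,2)] in auto)
  then show ?thesis
    using assms simplicial_complex_subface[OF assms(1,2) supp] by (simp add: geom_realization_def)
qed

definition barycenter :: "'a set \<Rightarrow> 'a \<Rightarrow> real" where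
  "barycenter \<sigma> v = (if v \<in> \<sigma> then 1 / real (card \<sigma>) else 0)"

lemma barycenter_in_geom_realization:
  assumes "simplicial_complex \<Delta>" "\<sigma> \<in> \<Delta>" "\<sigma> \<noteq> {}"
  shows "barycenter \<sigma> \<in> geom_realization \<Delta>"
proof (rule geom_realization_memI[OF assms(1,2)])
  have "0 < card \<sigma>"
    using simplicial_complex_finite_face[OF assms(1,2)] assms(3) by (simp add: card_gt_0_iff)
  then show "(\<Sum>v\<in>\<sigma>. barycenter \<sigma> v) = 1" by (simp add: barycenter_def)
  show "0 \<le> barycenter \<sigma> v" for v by (simp add: barycenter_def)
  show "barycenter \<sigma> v \<noteq> 0 \<Longrightarrow> v \<in> \<sigma>" for v by (simp add: barycenter_def split: if_splits)
qed

lemma geom_realization_segment: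
  assumes "simplicial_complex \<Delta>" "\<sigma> \<in> \<Delta>"
    and x: "x \<in> geom_realization \<Delta>" "{v. x v \<noteq> 0} \<subseteq> \<sigma>"
    and y: "y \<in> geom_realization \<Delta>" "{v. y v \<noteq> 0} \<subseteq> \<sigma>"
    and s: "0 \<le> s" "s \<le> 1"
  shows "(\<lambda>v. x v + s * (y v - x v)) \<in> geom_realization \<Delta>"
proof (rule geom_realization_memI[OF assms(1,2)])
  have fin: "finite \<sigma>" using simplicial_complex_finite_face[OF assms(1,2)] .
  show "0 \<le> x v + s * (y v - x v)" for v
  proof -
    have "x v + s * (y v - x v) = (1 - s) * x v + s * y v" by (simp add: algebra_simps)
    then show ?thesis using s geom_realization_nonneg[OF x(1)] geom_realization_nonneg[OF y(1)] by simp
  qed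
  show "v \<in> \<sigma>" if "x v + s * (y v - x v) \<noteq> 0" for v
  proof (rule ccontr)
    assume "v \<notin> \<sigma>"
    then have "x v = 0" "y v = 0" using x(2) y(2) by auto
    then show False using that by simp
  qed
  show "(\<Sum>v\<in>\<sigma>. x v + s * (y v - x v)) = 1"
    using geom_realization_sum[OF x(1) fin x(2)] geom_realization_sum[OF y(1) fin y(2)]
    by (simp add: sum.distrib sum_subtractf sum_distrib_left[symmetric])
qed

lemma openin_positive_coordinates:
  assumes "finite A"
  shows "openin (subtopology (powertop_real UNIV) S) {x \<in> S. \<forall>v\<in>A. 0 < x v}"
proof -
  let ?T = "subtopology (powertop_real UNIV) S"
  have "openin ?T {x \<in> topspace ?T. x v \<in> {0<..}}" for v
    by (rule openin_continuous_map_preimage[OF continuous_map_powertop_subtopology_projection]) simp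
  then have "openin ?T ((\<Inter>v\<in>A. {x \<in> topspace ?T. x v \<in> {0<..}}) \<inter> topspace ?T)"
    using assms by blast
  moreover have "(\<Inter>v\<in>A. {x \<in> topspace ?T. x v \<in> {0<..}}) \<inter> topspace ?T = {x \<in> S. \<forall>v\<in>A. 0 < x v}"
    by auto
  ultimately show ?thesis by simp
qed

lemma openin_powertop_ray:
  assumes V: "openin (subtopology (powertop_real UNIV) S) V" and p: "p \<in> V"
  obtains t where "0 < t"
    "\<And>s. 0 \<le> s \<Longrightarrow> s \<le> t \<Longrightarrow> (\<lambda>v. p v + s * w v) \<in> S \<Longrightarrow> (\<lambda>v. p v + s * w v) \<in> V"
proof -
  obtain U where U: "openin (powertop_real UNIV) U" "V = S \<inter> U"
    using V by (auto simp: openin_subtopology)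
  define q where "q s = (\<lambda>v. p v + s * w v)" for s :: real
  have "continuous_map euclideanreal (powertop_real UNIV) q"
    unfolding q_def by (auto simp: continuous_map_componentwise_UNIV intro!: continuous_intros)
  from openin_continuous_map_preimage[OF this U(1)] have "open {s. q s \<in> U}" by simp
  moreover have "q 0 \<in> U" using p U by (simp add: q_def)
  ultimately obtain e where e: "0 < e" "ball 0 e \<subseteq> {s. q s \<in> U}"
    by (metis mem_Collect_eq open_contains_ball)
  show thesis
  proof (rule that[of "e/2"])
    show "0 < e/2" using e by simp
    fix s assume s: "0 \<le> s" "s \<le> e/2" and inS: "(\<lambda>v. p v + s * w v) \<in> S"
    have "s \<in> ball 0 e" using s e(1) by simp
    then have "q s \<in> U" using e(2) by blast
    then show "(\<lambda>v. p v + s * w v) \<in> V" using U inS by (simp add: q_def)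
  qed
qed

lemma openin_Euclidean_space_decrease_coordinate:
  assumes U: "openin (Euclidean_space n) U" and y: "y \<in> U" and k: "k < n"
  obtains y' where "y' \<in> U" "y' k < y k"
proof -
  obtain t where t: "0 < t" and ray: "\<And>s. 0 \<le> s \<Longrightarrow> s \<le> t \<Longrightarrow>
      (\<lambda>i. y i + s * (if i = k then -1 else 0)) \<in> {x. \<forall>i\<ge>n. x i = 0} \<Longrightarrow>
      (\<lambda>i. y i + s * (if i = k then -1 else 0)) \<in> U"
    using U y unfolding Euclidean_space_def
    by (rule openin_powertop_ray[where w = "\<lambda>i. if i = k then -1 else 0"]) blast
  have "y \<in> topspace (Euclidean_space n)" using openin_subset[OF U] y by blast
  then have "(\<lambda>i. y i + t * (if i = k then -1 else 0)) \<in> U"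
    using ray[of t] t k by (simp add: topspace_Euclidean_space)
  then show thesis using that t by simp
qed

lemma openin_realization_space_toward_vertex:
  assumes sc: "simplicial_complex \<Delta>" and V: "openin (realization_space \<Delta>) V" and x: "x \<in> V"
    and \<sigma>: "\<sigma> \<in> \<Delta>" "{v. x v \<noteq> 0} \<subseteq> \<sigma>" "c \<in> \<sigma>"
  obtains y where "y \<in> V" "0 < y c"
proof -
  let ?q = "barycenter {c}"
  obtain t where t: "0 < t" and ray: "\<And>s. 0 \<le> s \<Longrightarrow> s \<le> t \<Longrightarrow>
      (\<lambda>v. x v + s * (?q v - x v)) \<in> geom_realization \<Delta> \<Longrightarrow> (\<lambda>v. x v + s * (?q v - x v)) \<in> V"
    using V x by (rule openin_powertop_ray[where w = "\<lambda>v. ?q v - x v"]) blast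
  define s where "s = min t 1"
  have s: "0 < s" "s \<le> t" "s \<le> 1" using t by (auto simp: s_def)
  have xX: "x \<in> geom_realization \<Delta>" using openin_subset[OF V] x by auto
  have "{c} \<in> \<Delta>" using simplicial_complex_subface[OF sc \<sigma>(1)] \<sigma>(3) by blast
  then have "?q \<in> geom_realization \<Delta>" using barycenter_in_geom_realization[OF sc] by blast
  moreover have "{v. ?q v \<noteq> 0} \<subseteq> \<sigma>" using \<sigma>(3) by (auto simp: barycenter_def split: if_splits)
  ultimately have "(\<lambda>v. x v + s * (?q v - x v)) \<in> geom_realization \<Delta>"
    using geom_realization_segment[OF sc \<sigma>(1) xX \<sigma>(2)] s by simp
  then have "(\<lambda>v. x v + s * (?q v - x v)) \<in> V" using ray s by simp
  moreover have "0 < x c + s * (?q c - x c)"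
  proof -
    have "x c + s * (?q c - x c) = (1 - s) * x c + s" by (simp add: barycenter_def algebra_simps)
    then show ?thesis using s geom_realization_nonneg[OF xX, of c] by (smt (verit) mult_nonneg_nonneg)
  qed
  ultimately show thesis using that by simp
qed

lemma barycentric_coordinates_eq:
  fixes x y :: "'a \<Rightarrow> real"
  assumes F: "finite F" "u \<in> F" and supp: "{v. x v \<noteq> 0} \<subseteq> F" "{v. y v \<noteq> 0} \<subseteq> F"
    and sum: "(\<Sum>v\<in>F. x v) = (\<Sum>v\<in>F. y v)" and eq: "\<And>v. v \<in> F - {u} \<Longrightarrow> x v = y v"
  shows "x = y"
proof
  have "(\<Sum>v\<in>F - {u}. x v) = (\<Sum>v\<in>F - {u}. y v)" using eq by (rule sum.cong[OF refl])
  then have "x u = y u" using sum sum.remove[OF F, of x] sum.remove[OF F, of y] by simp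
  then show "x v = y v" for v
  proof (cases "v \<in> F")
    case True
    then show ?thesis using eq \<open>x u = y u\<close> by (cases "v = u") auto
  next
    case False
    then have "x v = 0" "y v = 0" using supp by blast+
    then show ?thesis by simp
  qed
qed

lemma locally_Euclidean_realization_ridge_not_free:
  assumes sc: "simplicial_complex \<Delta>"
    and T: "locally_Euclidean (realization_space \<Delta>) (Suc m)"
    and R: "R \<in> \<Delta>" "card R = Suc m" and a: "a \<notin> R"
    and cofaces: "\<And>\<sigma>. \<sigma> \<in> \<Delta> \<Longrightarrow> R \<subseteq> \<sigma> \<Longrightarrow> \<sigma> \<subseteq> insert a R"
  shows False
proof -
  define X where "X = geom_realization \<Delta>"
  have finR: "finite R" using simplicial_complex_finite_face[OF sc R(1)] .
  obtain u where u: "u \<in> R" using R(2) by fastforce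
  have "card (insert a R - {u}) = Suc m" using finR a u R(2) by simp
  then obtain e where e: "bij_betw e {..<Suc m} (insert a R - {u})"
    using ex_bij_betw_nat_finite[of "insert a R - {u}"] finR by (auto simp: atLeast0LessThan)
  have "a \<in> e ` {..<Suc m}" using e a u by (auto simp: bij_betw_def)
  then obtain k where k: "k < Suc m" "a = e k" by blast
  define B where "B = {x \<in> X. \<forall>v\<in>R. 0 < x v}"
  have B: "openin (realization_space \<Delta>) B"
    unfolding B_def X_def using finR by (rule openin_positive_coordinates)
  have "barycenter R \<in> B"
    using barycenter_in_geom_realization[OF sc R(1)] R(2) u by (auto simp: B_def X_def barycenter_def)
  have B_simplex: "{v. x v \<noteq> 0} \<subseteq> insert a R" "(\<Sum>v\<in>insert a R. x v) = 1" if "x \<in> B" for x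
  proof -
    have xX: "x \<in> geom_realization \<Delta>" using that by (simp add: B_def X_def)
    have "{v. x v \<noteq> 0} \<in> \<Delta>" using xX by (rule geom_realization_support)
    moreover have "R \<subseteq> {v. x v \<noteq> 0}" using that by (force simp: B_def)
    ultimately show supp: "{v. x v \<noteq> 0} \<subseteq> insert a R" using cofaces by blast
    show "(\<Sum>v\<in>insert a R. x v) = 1"
      using geom_realization_sum[OF xX _ supp] finR by simp
  qed
  define \<theta> where "\<theta> x = (\<lambda>i. if i < Suc m then x (e i) else 0)" for x :: "'a \<Rightarrow> real"
  have \<theta>: "continuous_map (subtopology (realization_space \<Delta>) B) (Euclidean_space (Suc m)) \<theta>"
    unfolding \<theta>_def continuous_map_componentwise_Euclidean_space subtopology_subtopology
    by (simp add: continuous_map_powertop_subtopology_projection)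
  have "inj_on \<theta> B"
  proof
    fix x y assume xy: "x \<in> B" "y \<in> B" "\<theta> x = \<theta> y"
    have "x v = y v" if v: "v \<in> insert a R - {u}" for v
    proof -
      have "v \<in> e ` {..<Suc m}" using e v by (simp add: bij_betw_def)
      then obtain i where "i < Suc m" "v = e i" by blast
      then show ?thesis using fun_cong[OF xy(3), of i] by (simp add: \<theta>_def)
    qed
    then show "x = y"
      using barycentric_coordinates_eq[of "insert a R" u x y] finR u B_simplex xy(1,2) by simp
  qed
  then have "openin (Euclidean_space (Suc m)) (\<theta> ` B)"
    by (rule invariance_of_domain_from_locally_Euclidean[OF T B \<theta>])
  moreover have "\<theta> (barycenter R) \<in> \<theta> ` B" using \<open>barycenter R \<in> B\<close> by (rule imageI)
  ultimately obtain y where "y \<in> \<theta> ` B" "y k < \<theta> (barycenter R) k"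
    using k(1) by (rule openin_Euclidean_space_decrease_coordinate)
  then obtain x where x: "x \<in> B" "\<theta> x k < \<theta> (barycenter R) k" by blast
  then have "x a < 0" using k a by (simp add: \<theta>_def barycenter_def)
  moreover have "x \<in> geom_realization \<Delta>" using x(1) by (simp add: B_def X_def)
  then have "0 \<le> x a" by (rule geom_realization_nonneg)
  ultimately show False by simp
qed

context
  fixes \<Delta> :: "'a set set" and R :: "'a set" and m :: nat and r :: "nat \<Rightarrow> 'a" and a b :: 'a
  assumes sc: "simplicial_complex \<Delta>" and enum: "bij_betw r {..<Suc m} R"
    and ab: "insert a R \<in> \<Delta>" "insert b R \<in> \<Delta>" "a \<notin> R" "b \<notin> R" "a \<noteq> b"
begin

definition hinge_rest :: "(nat \<Rightarrow> real) \<Rightarrow> real" where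
  "hinge_rest y = 1 - (\<Sum>i<m. y i) - \<bar>y m\<bar>"

definition hinge :: "(nat \<Rightarrow> real) \<Rightarrow> 'a \<Rightarrow> real" where
  "hinge y v =
     (if v \<in> R then (if the_inv_into {..<Suc m} r v < m then y (the_inv_into {..<Suc m} r v) else hinge_rest y)
      else if v = a then max (y m) 0 else if v = b then max (- y m) 0 else 0)"

definition hinge_domain :: "(nat \<Rightarrow> real) set" where
  "hinge_domain = {y \<in> topspace (Euclidean_space (Suc m)). (\<forall>i\<in>{..<m}. 0 < y i) \<and> 0 < hinge_rest y}"

lemma hinge_enum: "j < Suc m \<Longrightarrow> hinge y (r j) = (if j < m then y j else hinge_rest y)"
  using enum the_inv_into_f_f[of r "{..<Suc m}" j] by (auto simp: hinge_def bij_betw_def)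

lemma hinge_apex: "hinge y a = max (y m) 0" "hinge y b = max (- y m) 0"
  using ab by (simp_all add: hinge_def)

lemma hinge_outside: "v \<notin> insert a (insert b R) \<Longrightarrow> hinge y v = 0"
  by (simp add: hinge_def)

lemma sum_hinge_ridge: "(\<Sum>v\<in>R. hinge y v) = 1 - \<bar>y m\<bar>"
proof -
  have "(\<Sum>v\<in>R. hinge y v) = (\<Sum>j<Suc m. hinge y (r j))"
    using sum.reindex_bij_betw[OF enum, of "hinge y"] by simp
  also have "\<dots> = (\<Sum>j<m. y j) + hinge_rest y" using hinge_enum by simp
  finally show ?thesis by (simp add: hinge_rest_def)
qed

lemma openin_hinge_domain: "openin (Euclidean_space (Suc m)) hinge_domain"
proof -
  let ?E = "Euclidean_space (Suc m)"
  define P where "P = {y \<in> topspace ?E. \<forall>i\<in>{..<m}. 0 < y i}"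
  have P: "openin ?E P"
    using openin_positive_coordinates[of "{..<m}" "{x. \<forall>i\<ge>Suc m. x i = 0}"]
    by (simp add: P_def Euclidean_space_def)
  have "continuous_map (subtopology ?E P) euclideanreal hinge_rest"
    unfolding hinge_rest_def
    by (intro continuous_intros continuous_map_from_subtopology continuous_map_Euclidean_space_projection) simp
  from openin_continuous_map_preimage[OF this, of "{0<..}"]
  have "openin (subtopology ?E P) hinge_domain"
    using openin_subset[OF P] by (simp add: hinge_domain_def P_def Int_absorb1 conj_assoc)
  then show ?thesis using P openin_trans_full by blast
qed

lemma hinge_nonneg: "y \<in> hinge_domain \<Longrightarrow> 0 \<le> hinge y v"
  by (simp add: hinge_domain_def hinge_def less_imp_le)

lemma hinge_in_geom_realization:
  assumes y: "y \<in> hinge_domain"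
  shows "hinge y \<in> geom_realization \<Delta>"
proof -
  have finR: "finite R" using bij_betw_finite[OF enum] by simp
  show ?thesis
  proof (cases "0 \<le> y m")
    case True
    show ?thesis
    proof (rule geom_realization_memI[OF sc ab(1)])
      show "0 \<le> hinge y v" for v using hinge_nonneg[OF y] .
      show "v \<in> insert a R" if "hinge y v \<noteq> 0" for v
        using that True hinge_apex(2) hinge_outside by (cases "v = b") auto
      show "(\<Sum>v\<in>insert a R. hinge y v) = 1"
        using sum_hinge_ridge[of y] ab True finR by (simp add: hinge_apex(1))
    qed
  next
    case False
    show ?thesis
    proof (rule geom_realization_memI[OF sc ab(2)])
      show "0 \<le> hinge y v" for v using hinge_nonneg[OF y] .
      show "v \<in> insert b R" if "hinge y v \<noteq> 0" for v
        using that False hinge_apex(1) hinge_outside by (cases "v = a") auto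
      show "(\<Sum>v\<in>insert b R. hinge y v) = 1"
        using sum_hinge_ridge[of y] ab False finR by (simp add: hinge_apex(2))
    qed
  qed
qed

lemma continuous_map_hinge:
  "continuous_map (subtopology (Euclidean_space (Suc m)) hinge_domain) (realization_space \<Delta>) hinge"
proof -
  have "continuous_map (subtopology (Euclidean_space (Suc m)) hinge_domain) euclideanreal (\<lambda>y. hinge y v)" for v
    unfolding hinge_def hinge_rest_def
    by (intro continuous_intros continuous_map_from_subtopology continuous_map_Euclidean_space_projection) simp
  then show ?thesis
    using openin_subset[OF openin_hinge_domain] hinge_in_geom_realization
    by (auto simp: continuous_map_in_subtopology continuous_map_componentwise_UNIV)
qed

lemma inj_on_hinge: "inj_on hinge hinge_domain"
proof
  fix y z assume yz: "y \<in> hinge_domain" "z \<in> hinge_domain" "hinge y = hinge z"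
  show "y = z"
  proof
    fix i
    consider "i < m" | "i = m" | "m < i" by linarith
    then show "y i = z i"
    proof cases
      case 1
      then show ?thesis using hinge_enum[of i y] hinge_enum[of i z] yz(3) by simp
    next
      case 2
      have "hinge y a - hinge y b = hinge z a - hinge z b" using yz(3) by simp
      then show ?thesis using 2 by (simp add: hinge_apex)
    next
      case 3
      then show ?thesis using yz(1,2) by (simp add: hinge_domain_def topspace_Euclidean_space)
    qed
  qed
qed

lemma barycenter_in_hinge_image: "barycenter R \<in> hinge ` hinge_domain"
proof
  define c where "c = 1 / real (Suc m)"
  have rest: "hinge_rest (\<lambda>i. if i < m then c else 0) = c" by (simp add: hinge_rest_def c_def field_simps)
  have "card R = Suc m" using enum by (simp add: bij_betw_same_card[symmetric])
  then show "barycenter R = hinge (\<lambda>i. if i < m then c else 0)"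
    using enum the_inv_into_f_f[of r "{..<Suc m}"] rest ab(3,4)
    by (auto simp: fun_eq_iff barycenter_def hinge_def c_def bij_betw_def)
  show "(\<lambda>i. if i < m then c else 0) \<in> hinge_domain"
    using rest by (simp add: hinge_domain_def c_def topspace_Euclidean_space)
qed

end

lemma locally_Euclidean_realization_ridge_not_branching:
  assumes sc: "simplicial_complex \<Delta>"
    and T: "locally_Euclidean (realization_space \<Delta>) (Suc m)"
    and R: "card R = Suc m"
    and abc: "insert a R \<in> \<Delta>" "insert b R \<in> \<Delta>" "insert c R \<in> \<Delta>" "a \<notin> R" "b \<notin> R" "c \<notin> R"
      "a \<noteq> b" "a \<noteq> c" "b \<noteq> c"
  shows False
proof -
  have "finite R" using R card_ge_0_finite by force
  then obtain r where r: "bij_betw r {..<Suc m} R"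
    using ex_bij_betw_nat_finite[of R] R by (auto simp: atLeast0LessThan)
  define h where "h = hinge R m r a b"
  define U where "U = hinge_domain m"
  note hinge = openin_hinge_domain continuous_map_hinge inj_on_hinge barycenter_in_hinge_image hinge_outside
  note hinge = hinge[OF sc r abc(1,2,4,5,7), folded h_def U_def]
  have V: "openin (realization_space \<Delta>) (h ` U)"
    using hinge(1-3) by (rule invariance_of_domain_into_locally_Euclidean[OF T])
  have "{v. barycenter R v \<noteq> 0} \<subseteq> insert c R" by (auto simp: barycenter_def split: if_splits)
  then obtain x where "x \<in> h ` U" "0 < x c"
    using openin_realization_space_toward_vertex[OF sc V hinge(4) abc(3)] by blast
  then show False using hinge(5) abc by auto
qed

lemma facet_eq_insert_ridge:
  assumes "finite F" "card F = Suc (Suc m)" "card R = Suc m" "R \<subseteq> F"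
  obtains v where "v \<notin> R" "F = insert v R"
proof -
  have "card (F - R) = 1" using assms by (simp add: card_Diff_subset finite_subset)
  then obtain v where "F - R = {v}" by (auto simp: card_1_singleton_iff)
  then show thesis using that assms(4) by blast
qed

lemma locally_Euclidean_realization_ridge_in_two_facets:
  assumes sc: "simplicial_complex \<Delta>"
    and T: "locally_Euclidean (realization_space \<Delta>) (Suc m)"
    and facets: "\<And>F. F \<in> facets \<Delta> \<Longrightarrow> card F = Suc (Suc m)"
    and R: "R \<in> \<Delta>" "card R = Suc m"
  shows "card {F \<in> facets \<Delta>. R \<subseteq> F} = 2"
proof -
  define A where "A = {v. v \<notin> R \<and> insert v R \<in> facets \<Delta>}"
  have A_faces: "insert v R \<in> \<Delta>" "v \<notin> R" if "v \<in> A" for v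
    using that by (simp_all add: A_def facets_def)
  have facet_A: "\<exists>v\<in>A. F = insert v R" if F: "F \<in> facets \<Delta>" "R \<subseteq> F" for F
  proof -
    have "finite F" using F(1) sc by (auto simp: facets_def simplicial_complex_def)
    then obtain v where "v \<notin> R" "F = insert v R" using facet_eq_insert_ridge facets F R(2) by metis
    then show ?thesis using F(1) by (auto simp: A_def)
  qed
  have facets_A: "{F \<in> facets \<Delta>. R \<subseteq> F} = (\<lambda>v. insert v R) ` A"
  proof
    show "{F \<in> facets \<Delta>. R \<subseteq> F} \<subseteq> (\<lambda>v. insert v R) ` A" using facet_A by force
    show "(\<lambda>v. insert v R) ` A \<subseteq> {F \<in> facets \<Delta>. R \<subseteq> F}" by (auto simp: A_def)
  qed
  obtain F where "F \<in> facets \<Delta>" "R \<subseteq> F" using simplicial_complex_face_subset_facet[OF sc R(1)] .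
  then obtain a where a: "a \<in> A" using facet_A by blast
  have "\<exists>b\<in>A. b \<noteq> a"
  proof (rule ccontr)
    assume only_a: "\<not> ?thesis"
    have "\<sigma> \<subseteq> insert a R" if \<sigma>: "\<sigma> \<in> \<Delta>" "R \<subseteq> \<sigma>" for \<sigma>
    proof -
      obtain F where F: "F \<in> facets \<Delta>" "\<sigma> \<subseteq> F"
        using simplicial_complex_face_subset_facet[OF sc \<sigma>(1)] .
      moreover have "R \<subseteq> F" using \<sigma>(2) F(2) by (rule order.trans)
      ultimately obtain v where "v \<in> A" "F = insert v R" using facet_A by blast
      moreover have "v = a" using \<open>v \<in> A\<close> only_a by blast
      ultimately show ?thesis using F(2) by simp
    qed
    then show False by (rule locally_Euclidean_realization_ridge_not_free[OF sc T R A_faces(2)[OF a]])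
  qed
  then obtain b where b: "b \<in> A" "b \<noteq> a" by blast
  have "A = {a, b}"
  proof (rule ccontr)
    assume "A \<noteq> {a, b}"
    then obtain c where c: "c \<in> A" "c \<noteq> a" "c \<noteq> b" using a b by blast
    show False
      by (rule locally_Euclidean_realization_ridge_not_branching[OF sc T R(2) A_faces(1)[OF a]
          A_faces(1)[OF b(1)] A_faces(1)[OF c(1)] A_faces(2)[OF a] A_faces(2)[OF b(1)] A_faces(2)[OF c(1)]
          not_sym[OF b(2)] not_sym[OF c(2)] not_sym[OF c(3)]])
  qed
  moreover have "insert a R \<noteq> insert b R" using A_faces(2)[OF b(1)] b(2) by blast
  ultimately show ?thesis using facets_A by simp
qed

lemma card_supersets_within:
  assumes "finite F" "W \<subseteq> F"
  shows "card {\<sigma>. W \<subseteq> \<sigma> \<and> \<sigma> \<subseteq> F} = 2 ^ card (F - W)"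
proof -
  have "bij_betw (\<lambda>\<tau>. \<tau> \<union> W) (Pow (F - W)) {\<sigma>. W \<subseteq> \<sigma> \<and> \<sigma> \<subseteq> F}"
  proof (rule bij_betw_byWitness[where f' = "\<lambda>\<sigma>. \<sigma> - W"])
    show "(\<lambda>\<tau>. \<tau> \<union> W) ` Pow (F - W) \<subseteq> {\<sigma>. W \<subseteq> \<sigma> \<and> \<sigma> \<subseteq> F}" using assms(2) by auto
    show "(\<lambda>\<sigma>. \<sigma> - W) ` {\<sigma>. W \<subseteq> \<sigma> \<and> \<sigma> \<subseteq> F} \<subseteq> Pow (F - W)" by auto
  qed auto
  then show ?thesis using assms(1) by (simp add: bij_betw_same_card[symmetric] card_Pow)
qed

lemma Ex1_iff_Collect_eq_singleton: "(\<exists>!x. P x) \<longleftrightarrow> (\<exists>x. Collect P = {x})"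
  by (auto simp: set_eq_iff)

lemma card_filter_eq_sum: "finite A \<Longrightarrow> card {x \<in> A. P x} = (\<Sum>x\<in>A. if P x then 1 else 0)"
  by (simp add: sum.inter_filter[symmetric])

lemma orientation_subset_facets: "orientation \<Delta> d Or \<Longrightarrow> Or \<subseteq> facets \<Delta> \<times> facets \<Delta>"
  unfolding orientation_def fr_adj_def by auto

locale pseudomanifold =
  fixes \<Delta> :: "'a set set" and d :: nat
  assumes simplicial_complex: "simplicial_complex \<Delta>"
    and card_facet: "F \<in> facets \<Delta> \<Longrightarrow> card F = d"
    and ridge_in_two_facets: "R \<in> \<Delta> \<Longrightarrow> card R = d - 1 \<Longrightarrow> card {F \<in> facets \<Delta>. R \<subseteq> F} = 2"
    and dim_pos: "0 < d"
begin

lemma facet_in_complex: "F \<in> facets \<Delta> \<Longrightarrow> F \<in> \<Delta>"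
  by (simp add: facets_def)

lemma finite_complex: "finite \<Delta>"
  using simplicial_complex by (simp add: simplicial_complex_def)

lemma finite_facets: "finite (facets \<Delta>)"
  using finite_complex by (simp add: facets_def)

lemma finite_facet: "F \<in> facets \<Delta> \<Longrightarrow> finite F"
  using simplicial_complex facet_in_complex simplicial_complex_finite_face by blast

lemma card_face_le: "\<sigma> \<in> \<Delta> \<Longrightarrow> card \<sigma> \<le> d"
  by (metis simplicial_complex_face_subset_facet[OF simplicial_complex] card_facet card_mono finite_facet)

lemma ex1_opposite_facet:
  assumes F: "F \<in> facets \<Delta>" and v: "v \<in> F"
  shows "\<exists>!G. G \<in> facets \<Delta> \<and> G \<noteq> F \<and> F - {v} \<subseteq> G"
proof -
  have "F - {v} \<in> \<Delta>" using simplicial_complex_subface[OF simplicial_complex facet_in_complex[OF F]] by blast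
  moreover have "card (F - {v}) = d - 1" using card_facet[OF F] finite_facet[OF F] v by simp
  ultimately have "card {G \<in> facets \<Delta>. F - {v} \<subseteq> G} = 2" by (rule ridge_in_two_facets)
  then obtain G1 G2 where G12: "{G \<in> facets \<Delta>. F - {v} \<subseteq> G} = {G1, G2}" "G1 \<noteq> G2"
    unfolding card_2_iff by blast
  then have mem: "G \<in> facets \<Delta> \<and> F - {v} \<subseteq> G \<longleftrightarrow> G = G1 \<or> G = G2" for G
    by (simp add: set_eq_iff)
  then consider "F = G1" | "F = G2" using F by blast
  then show ?thesis
  proof cases
    case 1
    then show ?thesis using mem G12(2) by (intro ex1I[of _ G2]) auto
  next
    case 2
    then show ?thesis using mem G12(2) by (intro ex1I[of _ G1]) auto
  qed
qed

definition opposite_facet :: "'a set \<Rightarrow> 'a \<Rightarrow> 'a set" where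
  "opposite_facet F v = (THE G. G \<in> facets \<Delta> \<and> G \<noteq> F \<and> F - {v} \<subseteq> G)"

lemma opposite_facet:
  assumes "F \<in> facets \<Delta>" "v \<in> F"
  shows "opposite_facet F v \<in> facets \<Delta>" "opposite_facet F v \<noteq> F" "F - {v} \<subseteq> opposite_facet F v"
  using theI'[OF ex1_opposite_facet[OF assms]] unfolding opposite_facet_def by auto

lemma opposite_facet_unique:
  assumes "F \<in> facets \<Delta>" "v \<in> F" "G \<in> facets \<Delta>" "G \<noteq> F" "F - {v} \<subseteq> G"
  shows "G = opposite_facet F v"
  using the1_equality[OF ex1_opposite_facet[OF assms(1,2)], of G] assms unfolding opposite_facet_def by auto

lemma vertex_notin_opposite_facet:
  assumes F: "F \<in> facets \<Delta>" and v: "v \<in> F"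
  shows "v \<notin> opposite_facet F v"
proof
  assume "v \<in> opposite_facet F v"
  then have "F \<subseteq> opposite_facet F v" using opposite_facet(3)[OF F v] by blast
  moreover have "card (opposite_facet F v) = card F" using card_facet F opposite_facet(1)[OF F v] by simp
  ultimately show False
    using card_subset_eq finite_facet opposite_facet(1,2)[OF F v] by metis
qed

lemma fr_adj_opposite_facet:
  assumes F: "F \<in> facets \<Delta>" and v: "v \<in> F"
  shows "fr_adj \<Delta> d F (opposite_facet F v)"
proof -
  have "F - {v} \<in> \<Delta>" using simplicial_complex_subface[OF simplicial_complex facet_in_complex[OF F]] by blast
  moreover have "card (F - {v}) = d - 1" using card_facet[OF F] finite_facet[OF F] v by simp
  ultimately show ?thesis unfolding fr_adj_def using F opposite_facet[OF F v] by blast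
qed

lemma fr_adj_imp_opposite_facet:
  assumes "fr_adj \<Delta> d F G"
  obtains v where "v \<in> F" "G = opposite_facet F v"
proof -
  obtain R where R: "R \<in> \<Delta>" "card R = d - 1" "R \<subseteq> F" "R \<subseteq> G"
    and F: "F \<in> facets \<Delta>" and G: "G \<in> facets \<Delta>" "G \<noteq> F"
    using assms unfolding fr_adj_def by blast
  have "card (F - R) = 1"
    using card_Diff_subset[OF finite_subset[OF R(3) finite_facet[OF F]] R(3)] card_facet[OF F] R(2) dim_pos
    by simp
  then obtain v where v: "F - R = {v}" by (auto simp: card_1_singleton_iff)
  then have "R = F - {v}" "v \<in> F" using R(3) by auto
  then show thesis using that opposite_facet_unique[OF F \<open>v \<in> F\<close> G] R(4) by blast
qed

lemma inj_on_opposite_facet: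
  assumes F: "F \<in> facets \<Delta>"
  shows "inj_on (opposite_facet F) F"
proof
  fix v w assume vw: "v \<in> F" "w \<in> F" "opposite_facet F v = opposite_facet F w"
  show "v = w"
  proof (rule ccontr)
    assume "v \<noteq> w"
    then have "w \<in> opposite_facet F v" using opposite_facet(3)[OF F vw(1)] vw(2) by blast
    then show False using vertex_notin_opposite_facet[OF F vw(2)] vw(3) by simp
  qed
qed

end

context pseudomanifold
begin

definition out_vertices :: "('a set \<times> 'a set) set \<Rightarrow> 'a set \<Rightarrow> 'a set" where
  "out_vertices Or F = {v \<in> F. (F, opposite_facet F v) \<in> Or}"

definition sinks :: "('a set \<times> 'a set) set \<Rightarrow> 'a set \<Rightarrow> 'a set set" where
  "sinks Or \<sigma> = {F \<in> V_sets \<Delta> \<sigma>. \<forall>G\<in>V_sets \<Delta> \<sigma>. (F, G) \<notin> Or}"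

context
  fixes Or assumes orientation: "orientation \<Delta> d Or"
begin

lemma orientation_edge_adj: "(F, G) \<in> Or \<Longrightarrow> fr_adj \<Delta> d F G"
  using orientation unfolding orientation_def by blast

lemma orientation_edge_iff: "fr_adj \<Delta> d F G \<Longrightarrow> (F, G) \<in> Or \<longleftrightarrow> (G, F) \<notin> Or"
  using orientation unfolding orientation_def by blast

lemma indegree_eq_card_in_vertices:
  assumes F: "F \<in> facets \<Delta>"
  shows "indegree Or F = card (F - out_vertices Or F)"
proof -
  have "{G. (G, F) \<in> Or} = opposite_facet F ` (F - out_vertices Or F)"
  proof
    show "{G. (G, F) \<in> Or} \<subseteq> opposite_facet F ` (F - out_vertices Or F)"
    proof
      fix G assume "G \<in> {G. (G, F) \<in> Or}"
      then have GF: "(G, F) \<in> Or" by simp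
      then have adj: "fr_adj \<Delta> d F G" using orientation_edge_adj unfolding fr_adj_def by blast
      then obtain v where v: "v \<in> F" "G = opposite_facet F v" by (rule fr_adj_imp_opposite_facet)
      have "(F, G) \<notin> Or" using orientation_edge_iff[OF adj] GF by blast
      then show "G \<in> opposite_facet F ` (F - out_vertices Or F)" using v by (auto simp: out_vertices_def)
    qed
    show "opposite_facet F ` (F - out_vertices Or F) \<subseteq> {G. (G, F) \<in> Or}"
      using orientation_edge_iff[OF fr_adj_opposite_facet[OF F]] by (auto simp: out_vertices_def)
  qed
  moreover have "inj_on (opposite_facet F) (F - out_vertices Or F)"
    using inj_on_opposite_facet[OF F] by (rule inj_on_subset) blast
  ultimately show ?thesis by (simp add: indegree_def card_image)
qed

lemma sink_iff_out_vertices_subset: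
  assumes F: "F \<in> facets \<Delta>" and \<sigma>: "\<sigma> \<subseteq> F"
  shows "(\<forall>G\<in>V_sets \<Delta> \<sigma>. (F, G) \<notin> Or) \<longleftrightarrow> out_vertices Or F \<subseteq> \<sigma>"
proof
  assume sink: "\<forall>G\<in>V_sets \<Delta> \<sigma>. (F, G) \<notin> Or"
  show "out_vertices Or F \<subseteq> \<sigma>"
  proof
    fix v assume "v \<in> out_vertices Or F"
    then have v: "v \<in> F" and edge: "(F, opposite_facet F v) \<in> Or" by (auto simp: out_vertices_def)
    show "v \<in> \<sigma>"
    proof (rule ccontr)
      assume "v \<notin> \<sigma>"
      then have "opposite_facet F v \<in> V_sets \<Delta> \<sigma>"
        using \<sigma> opposite_facet[OF F v] by (auto simp: V_sets_def)
      then show False using sink edge by blast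
    qed
  qed
next
  assume out: "out_vertices Or F \<subseteq> \<sigma>"
  show "\<forall>G\<in>V_sets \<Delta> \<sigma>. (F, G) \<notin> Or"
  proof (intro ballI notI)
    fix G assume G: "G \<in> V_sets \<Delta> \<sigma>" and edge: "(F, G) \<in> Or"
    obtain v where v: "v \<in> F" "G = opposite_facet F v"
      using orientation_edge_adj[OF edge] by (rule fr_adj_imp_opposite_facet)
    then have "v \<in> G" using edge out G by (auto simp: out_vertices_def V_sets_def)
    then show False using vertex_notin_opposite_facet[OF F v(1)] v(2) by simp
  qed
qed

lemma f_orient_eq_sum_facets: "f_orient \<Delta> d Or = (\<Sum>F\<in>facets \<Delta>. 2 ^ indegree Or F)"
proof -
  have "indegree Or F \<le> d" if "F \<in> facets \<Delta>" for F
    using indegree_eq_card_in_vertices[OF that] card_facet[OF that] finite_facet[OF that]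
    by (metis Diff_subset card_mono)
  then have "(\<Sum>F\<in>facets \<Delta>. 2 ^ indegree Or F) =
      (\<Sum>k\<in>{0..d}. \<Sum>F\<in>{F \<in> facets \<Delta>. indegree Or F = k}. 2 ^ indegree Or F)"
    using finite_facets by (intro sum.group[symmetric]) auto
  also have "\<dots> = f_orient \<Delta> d Or"
    unfolding f_orient_def h_vec_def by (rule sum.cong) auto
  finally show ?thesis ..
qed

lemma f_orient_eq_sum_card_sinks: "f_orient \<Delta> d Or = (\<Sum>\<sigma>\<in>\<Delta>. card (sinks Or \<sigma>))"
proof -
  have sunk: "{\<sigma> \<in> \<Delta>. \<sigma> \<subseteq> F \<and> out_vertices Or F \<subseteq> \<sigma>} = {\<sigma>. out_vertices Or F \<subseteq> \<sigma> \<and> \<sigma> \<subseteq> F}"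
    if "F \<in> facets \<Delta>" for F
    using simplicial_complex_subface[OF simplicial_complex facet_in_complex[OF that]] by blast
  have "card {\<sigma> \<in> \<Delta>. \<sigma> \<subseteq> F \<and> out_vertices Or F \<subseteq> \<sigma>} = 2 ^ indegree Or F" if "F \<in> facets \<Delta>" for F
    using card_supersets_within[OF finite_facet[OF that], of "out_vertices Or F"] sunk[OF that]
      indegree_eq_card_in_vertices[OF that] by (simp add: out_vertices_def)
  then have "f_orient \<Delta> d Or = (\<Sum>F\<in>facets \<Delta>. card {\<sigma> \<in> \<Delta>. \<sigma> \<subseteq> F \<and> out_vertices Or F \<subseteq> \<sigma>})"
    by (simp add: f_orient_eq_sum_facets)
  also have "\<dots> = (\<Sum>F\<in>facets \<Delta>. \<Sum>\<sigma>\<in>\<Delta>. if \<sigma> \<subseteq> F \<and> out_vertices Or F \<subseteq> \<sigma> then 1 else 0)"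
    using finite_complex by (simp add: card_filter_eq_sum)
  also have "\<dots> = (\<Sum>\<sigma>\<in>\<Delta>. \<Sum>F\<in>facets \<Delta>. if \<sigma> \<subseteq> F \<and> out_vertices Or F \<subseteq> \<sigma> then 1 else 0)"
    by (rule sum.swap)
  also have "\<dots> = (\<Sum>\<sigma>\<in>\<Delta>. card {F \<in> facets \<Delta>. \<sigma> \<subseteq> F \<and> out_vertices Or F \<subseteq> \<sigma>})"
    using finite_facets by (simp add: card_filter_eq_sum)
  also have "\<dots> = (\<Sum>\<sigma>\<in>\<Delta>. card (sinks Or \<sigma>))"
    using sink_iff_out_vertices_subset by (intro sum.cong refl arg_cong[where f = card])
      (auto simp: sinks_def V_sets_def)
  finally show ?thesis .
qed

lemma sinks_nonempty:
  assumes "acyclic Or" and "\<sigma> \<in> \<Delta>"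
  shows "sinks Or \<sigma> \<noteq> {}"
proof -
  have "finite Or"
    using orientation_subset_facets[OF orientation] finite_facets by (simp add: finite_subset)
  then have wf: "wf (Or\<inverse>)" using assms(1) by (rule finite_acyclic_wf_converse)
  obtain F where "F \<in> facets \<Delta>" "\<sigma> \<subseteq> F"
    using simplicial_complex_face_subset_facet[OF simplicial_complex assms(2)] .
  then have "F \<in> V_sets \<Delta> \<sigma>" by (simp add: V_sets_def)
  then obtain S where "S \<in> V_sets \<Delta> \<sigma>" "\<And>G. (G, S) \<in> Or\<inverse> \<Longrightarrow> G \<notin> V_sets \<Delta> \<sigma>"
    using wfE_min[OF wf] by metis
  then have "S \<in> sinks Or \<sigma>" by (auto simp: sinks_def)
  then show ?thesis by auto
qed

lemma good_orientation_iff_card_sinks: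
  "good_orientation \<Delta> d Or \<longleftrightarrow> (\<forall>\<sigma>\<in>\<Delta>. card (sinks Or \<sigma>) = 1)"
proof -
  have "good_orientation \<Delta> d Or \<longleftrightarrow>
      (\<forall>\<sigma>\<in>\<Delta>. \<exists>!F. F \<in> V_sets \<Delta> \<sigma> \<and> (\<forall>G\<in>V_sets \<Delta> \<sigma>. (F, G) \<notin> Or))"
    unfolding good_orientation_def
  proof (intro iffI ballI)
    fix \<sigma> assume all_k: "\<forall>k\<le>d. \<forall>\<sigma>\<in>\<Delta>. card \<sigma> = d - k \<longrightarrow>
        (\<exists>!F. F \<in> V_sets \<Delta> \<sigma> \<and> (\<forall>G\<in>V_sets \<Delta> \<sigma>. (F, G) \<notin> Or))" and \<sigma>: "\<sigma> \<in> \<Delta>"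
    have "card \<sigma> = d - (d - card \<sigma>)" using card_face_le[OF \<sigma>] by simp
    then show "\<exists>!F. F \<in> V_sets \<Delta> \<sigma> \<and> (\<forall>G\<in>V_sets \<Delta> \<sigma>. (F, G) \<notin> Or)"
      using all_k[rule_format, of "d - card \<sigma>" \<sigma>] \<sigma> by simp
  qed simp
  then show ?thesis by (simp add: sinks_def card_1_singleton_iff Ex1_iff_Collect_eq_singleton)
qed

lemma card_sinks_pos: "acyclic Or \<Longrightarrow> \<sigma> \<in> \<Delta> \<Longrightarrow> 0 < card (sinks Or \<sigma>)"
  using sinks_nonempty finite_facets by (simp add: card_gt_0_iff sinks_def V_sets_def)

lemma f_orient_eq_card_plus_excess:
  assumes "acyclic Or"
  shows "f_orient \<Delta> d Or = card \<Delta> + (\<Sum>\<sigma>\<in>\<Delta>. card (sinks Or \<sigma>) - 1)"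
proof -
  have "(\<Sum>\<sigma>\<in>\<Delta>. card (sinks Or \<sigma>)) = (\<Sum>\<sigma>\<in>\<Delta>. 1 + (card (sinks Or \<sigma>) - 1))"
    using card_sinks_pos[OF assms] by (intro sum.cong refl) (simp add: Suc_leI)
  also have "\<dots> = card \<Delta> + (\<Sum>\<sigma>\<in>\<Delta>. card (sinks Or \<sigma>) - 1)"
    by (simp only: sum.distrib) simp
  finally show ?thesis by (simp add: f_orient_eq_sum_card_sinks)
qed

lemma card_le_f_orient: "acyclic Or \<Longrightarrow> card \<Delta> \<le> f_orient \<Delta> d Or"
  by (simp add: f_orient_eq_card_plus_excess)

lemma f_orient_eq_card_iff_good:
  assumes "acyclic Or"
  shows "f_orient \<Delta> d Or = card \<Delta> \<longleftrightarrow> good_orientation \<Delta> d Or"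
proof -
  have "f_orient \<Delta> d Or = card \<Delta> \<longleftrightarrow> (\<forall>\<sigma>\<in>\<Delta>. card (sinks Or \<sigma>) - 1 = 0)"
    using finite_complex by (simp add: f_orient_eq_card_plus_excess[OF assms])
  also have "\<dots> \<longleftrightarrow> (\<forall>\<sigma>\<in>\<Delta>. card (sinks Or \<sigma>) = 1)"
    using card_sinks_pos[OF assms] by (intro ball_cong refl) (metis One_nat_def Suc_pred diff_is_0_eq' Suc_leI)
  finally show ?thesis by (simp add: good_orientation_iff_card_sinks)
qed

end

end

definition rank_orientation :: "'a set set \<Rightarrow> nat \<Rightarrow> ('a set \<Rightarrow> nat) \<Rightarrow> ('a set \<times> 'a set) set" where
  "rank_orientation \<Delta> d rk = {(F, G). fr_adj \<Delta> d F G \<and> rk G < rk F}"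

lemma acyclic_orientation_rank_orientation:
  assumes "inj_on rk (facets \<Delta>)"
  shows "acyclic_orientation \<Delta> d (rank_orientation \<Delta> d rk)"
proof -
  have "orientation \<Delta> d (rank_orientation \<Delta> d rk)"
    unfolding orientation_def
  proof (intro conjI allI impI)
    show "\<forall>(F, G)\<in>rank_orientation \<Delta> d rk. fr_adj \<Delta> d F G" by (auto simp: rank_orientation_def)
    fix F G assume adj: "fr_adj \<Delta> d F G"
    then have "rk F \<noteq> rk G" using assms unfolding fr_adj_def inj_on_def by blast
    moreover have "fr_adj \<Delta> d G F" using adj unfolding fr_adj_def by blast
    ultimately show "(F, G) \<in> rank_orientation \<Delta> d rk \<longleftrightarrow> (G, F) \<notin> rank_orientation \<Delta> d rk"
      using adj by (auto simp: rank_orientation_def)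
  qed
  moreover have "(rank_orientation \<Delta> d rk)\<inverse> \<subseteq> inv_image less_than rk"
    by (auto simp: rank_orientation_def)
  then have "wf ((rank_orientation \<Delta> d rk)\<inverse>)" by (rule wf_subset[OF wf_inv_image[OF wf_less_than]])
  then have "acyclic (rank_orientation \<Delta> d rk)" using wf_acyclic acyclic_converse by blast
  ultimately show ?thesis by (simp add: acyclic_orientation_def)
qed

lemma shelling_step_adjacent:
  assumes sc: "simplicial_complex \<Delta>" and T: "distinct T" "set T = facets \<Delta>"
    and pure: "pure_card (Pow (T ! i) \<inter> closure_of_faces {T ! j | j. j < i}) (d - 1)"
    and i: "i0 < i" "i < length T" and \<sigma>: "\<sigma> \<subseteq> T ! i0" "\<sigma> \<subseteq> T ! i"
  obtains j where "j < i" "\<sigma> \<subseteq> T ! j" "fr_adj \<Delta> d (T ! i) (T ! j)"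
proof -
  define K where "K = Pow (T ! i) \<inter> closure_of_faces {T ! j | j. j < i}"
  have Ti: "T ! i \<in> facets \<Delta>" using T(2) i(2) nth_mem by blast
  then have fin: "finite (T ! i)"
    using sc simplicial_complex_finite_face by (auto simp: facets_def)
  have \<sigma>K: "\<sigma> \<in> K" using \<sigma> i(1) unfolding K_def closure_of_faces_def by blast
  have "simplicial_complex K"
    unfolding simplicial_complex_def
  proof (intro conjI ballI allI impI)
    show "finite K" using fin by (simp add: K_def)
    show "K \<noteq> {}" using \<sigma>K by blast
    show "finite \<tau>" if "\<tau> \<in> K" for \<tau> using that fin by (auto simp: K_def intro: finite_subset)
    show "\<rho> \<in> K" if "\<tau> \<in> K" "\<rho> \<subseteq> \<tau>" for \<tau> \<rho> using that unfolding K_def closure_of_faces_def by blast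
  qed
  then obtain \<tau> where \<tau>: "\<tau> \<in> facets K" "\<sigma> \<subseteq> \<tau>"
    using \<sigma>K by (rule simplicial_complex_face_subset_facet)
  then have card_\<tau>: "card \<tau> = d - 1" using pure by (simp add: pure_card_def K_def)
  have "\<tau> \<in> K" using \<tau>(1) by (simp add: facets_def)
  then obtain j where j: "j < i" "\<tau> \<subseteq> T ! j" "\<tau> \<subseteq> T ! i"
    unfolding K_def closure_of_faces_def by blast
  have "T ! j \<in> facets \<Delta>" using T(2) j(1) i(2) nth_mem by (metis less_trans)
  moreover have "T ! j \<noteq> T ! i" using T(1) j(1) i(2) by (simp add: nth_eq_iff_index_eq)
  moreover have "\<tau> \<in> \<Delta>" using simplicial_complex_subface[OF sc _ j(3)] Ti by (simp add: facets_def)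
  ultimately have "fr_adj \<Delta> d (T ! i) (T ! j)"
    unfolding fr_adj_def using Ti card_\<tau> j(2,3) by blast
  then show thesis using that j(1) \<tau>(2) j(2) by blast
qed

lemma shellable_imp_good_acyclic_orientation:
  assumes sc: "simplicial_complex \<Delta>" and "shellable \<Delta> d"
  obtains Or where "acyclic_orientation \<Delta> d Or" "good_orientation \<Delta> d Or"
proof -
  obtain T where T: "distinct T" "set T = facets \<Delta>"
    and pure: "\<And>i. 0 < i \<Longrightarrow> i < length T \<Longrightarrow>
      pure_card (Pow (T ! i) \<inter> closure_of_faces {T ! j | j. j < i}) (d - 1)"
    using assms(2) unfolding shellable_def by blast
  define rk where "rk = the_inv_into {..<length T} ((!) T)"
  have inj_nth: "inj_on ((!) T) {..<length T}" using T(1) by (simp add: inj_on_nth)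
  have rk: "rk F < length T" "T ! rk F = F" if F: "F \<in> facets \<Delta>" for F
  proof -
    obtain i where "i < length T" "F = T ! i" using F T(2) by (metis in_set_conv_nth)
    then show "rk F < length T" "T ! rk F = F"
      using the_inv_into_f_f[OF inj_nth] by (simp_all add: rk_def)
  qed
  have inj_rk: "inj_on rk (facets \<Delta>)" using rk by (metis inj_onI)
  define Or where "Or = rank_orientation \<Delta> d rk"
  have "\<exists>!F. F \<in> V_sets \<Delta> \<sigma> \<and> (\<forall>G\<in>V_sets \<Delta> \<sigma>. (F, G) \<notin> Or)" if \<sigma>: "\<sigma> \<in> \<Delta>" for \<sigma>
  proof -
    obtain F1 where "F1 \<in> facets \<Delta>" "\<sigma> \<subseteq> F1" using simplicial_complex_face_subset_facet[OF sc \<sigma>] .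
    then have "F1 \<in> V_sets \<Delta> \<sigma>" by (simp add: V_sets_def)
    then obtain F0 where F0: "F0 \<in> V_sets \<Delta> \<sigma>" and min: "\<And>G. G \<in> V_sets \<Delta> \<sigma> \<Longrightarrow> rk F0 \<le> rk G"
      using ex_has_least_nat[of "\<lambda>F. F \<in> V_sets \<Delta> \<sigma>" F1 rk] by blast
    have "F = F0" if F: "F \<in> V_sets \<Delta> \<sigma>" "\<forall>G\<in>V_sets \<Delta> \<sigma>. (F, G) \<notin> Or" for F
    proof (rule ccontr)
      assume "F \<noteq> F0"
      have facets: "F \<in> facets \<Delta>" "F0 \<in> facets \<Delta>" using F(1) F0 by (auto simp: V_sets_def)
      then have "rk F0 < rk F" using min[OF F(1)] inj_rk \<open>F \<noteq> F0\<close> by (metis inj_onD le_neq_implies_less)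
      then obtain j where "j < rk F" "\<sigma> \<subseteq> T ! j" "fr_adj \<Delta> d (T ! rk F) (T ! j)"
        using shelling_step_adjacent[OF sc T pure, of "rk F" "rk F0" \<sigma>] rk facets F(1) F0
        by (auto simp: V_sets_def)
      moreover have "T ! j \<in> facets \<Delta>" "rk (T ! j) = j"
        using T \<open>j < rk F\<close> rk(1)[OF facets(1)] the_inv_into_f_f[OF inj_nth] by (auto simp: rk_def)
      ultimately have "(F, T ! j) \<in> Or" "T ! j \<in> V_sets \<Delta> \<sigma>"
        using rk(2)[OF facets(1)] by (auto simp: Or_def rank_orientation_def V_sets_def)
      then show False using F(2) by blast
    qed
    moreover have "\<forall>G\<in>V_sets \<Delta> \<sigma>. (F0, G) \<notin> Or"
      using min by (auto simp: Or_def rank_orientation_def dest!: min)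
    ultimately show ?thesis using F0 by blast
  qed
  then have "good_orientation \<Delta> d Or" by (simp add: good_orientation_def)
  then show thesis by (rule that[rotated]) (simp add: Or_def acyclic_orientation_rank_orientation[OF inj_rk])
qed

lemma sphere_pseudomanifold:
  assumes sphere: "is_sphere \<Delta> (d - 1)" and facets: "\<forall>F\<in>facets \<Delta>. card F = d" and "2 \<le> d"
  shows "pseudomanifold \<Delta> d"
proof -
  obtain m where d: "d = Suc (Suc m)" using \<open>2 \<le> d\<close> by (metis add_2_eq_Suc le_Suc_ex)
  have sc: "simplicial_complex \<Delta>" using sphere by (simp add: is_sphere_def)
  have "realization_space \<Delta> homeomorphic_space nsphere (Suc m)"
    using sphere by (simp add: is_sphere_def d)
  then have "locally_Euclidean (realization_space \<Delta>) (Suc m)"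
    using locally_Euclidean_nsphere by (rule locally_Euclidean_homeomorphic_space)
  then show ?thesis
    using locally_Euclidean_realization_ridge_in_two_facets[OF sc] sc facets
    by unfold_locales (simp_all add: d)
qed

lemma finite_acyclic_orientations:
  assumes "finite \<Delta>"
  shows "finite {Or. acyclic_orientation \<Delta> d Or}"
proof (rule finite_subset)
  show "{Or. acyclic_orientation \<Delta> d Or} \<subseteq> Pow (facets \<Delta> \<times> facets \<Delta>)"
    using orientation_subset_facets by (auto simp: acyclic_orientation_def)
  show "finite (Pow (facets \<Delta> \<times> facets \<Delta>))" using assms by (simp add: facets_def)
qed

theorem proposition3p4:
  fixes \<Delta> :: "'a set set" and d :: nat
  assumes "d \<ge> 3"
    and "is_sphere \<Delta> (d - 1)"
    and "\<forall>F\<in>facets \<Delta>. card F = d"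
    and "shellable \<Delta> d"
  shows "Min {f_orient \<Delta> d Or | Or. acyclic_orientation \<Delta> d Or} = card \<Delta> \<and>
    (\<forall>Or. acyclic_orientation \<Delta> d Or \<longrightarrow>
        (good_orientation \<Delta> d Or \<longleftrightarrow>
         f_orient \<Delta> d Or = Min {f_orient \<Delta> d Or' | Or'. acyclic_orientation \<Delta> d Or'}))"
proof -
  interpret pseudomanifold \<Delta> d
    using sphere_pseudomanifold[OF assms(2,3)] assms(1) by simp
  let ?S = "{f_orient \<Delta> d Or | Or. acyclic_orientation \<Delta> d Or}"
  obtain Or0 where Or0: "acyclic_orientation \<Delta> d Or0" "good_orientation \<Delta> d Or0"
    using shellable_imp_good_acyclic_orientation[OF simplicial_complex assms(4)] .
  have Min: "Min ?S = card \<Delta>"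
  proof (rule Min_eqI)
    show "finite ?S"
      using finite_acyclic_orientations[OF finite_complex] by (simp add: setcompr_eq_image)
    show "card \<Delta> \<le> f" if "f \<in> ?S" for f
      using that card_le_f_orient by (auto simp: acyclic_orientation_def)
    show "card \<Delta> \<in> ?S"
      using Or0 f_orient_eq_card_iff_good by (force simp: acyclic_orientation_def)
  qed
  show ?thesis
  proof (intro conjI allI impI)
    fix Or assume "acyclic_orientation \<Delta> d Or"
    then have "orientation \<Delta> d Or" "acyclic Or" by (simp_all add: acyclic_orientation_def)
    then show "good_orientation \<Delta> d Or \<longleftrightarrow> f_orient \<Delta> d Or = Min ?S"
      unfolding Min by (simp add: f_orient_eq_card_iff_good)
  qed (rule Min)
qed

end
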